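(* For each $\theta\in\mathbb R$, the function $r\mapsto T(re^{i\theta})$ is strictly decreasing on $(0,1)$ and strictly increasing on $(1,\infty)$, its minimum over $r\in(0,\infty)$ is attained at $r=1$, $\lim_{r\to0}T(re^{i\theta})=\lim_{r\to\infty}T(re^{i\theta})=\infty$, and $T(re^{i\theta})=T(r^{-1}e^{i\theta})$ for all $r>0$.
   Context: Let $\mu$ be a Borel probability measure on $\mathbb T$. For $r\in(0,\infty)\setminus\{1\}$ and $\theta\in\mathbb R$ let $f(r,\theta)=\frac12\frac{1-r^2}{-\log r}\int_{-\pi}^{\pi}\frac{d\mu(e^{ix})}{|1-re^{i(\theta-x)}|^2}$, and let $f(1^-,\theta)=\lim_{r\to1^-}f(r,\theta)=\int_{-\pi}^{\pi}\frac{d\mu(e^{ix})}{|1-e^{i(\theta-x)}|^2}\in(0,\infty]$. Define $T(re^{i\theta})=1/f(r,\theta)$ for $r\neq1$ and $T(e^{i\theta})=1/f(1^-,\theta)$ (with $1/\infty=0$). *)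

theory Defs
  imports "HOL-Probability.Probability"
begin

definition circle_borel_prob :: "complex measure \<Rightarrow> bool" where
  "circle_borel_prob M \<longleftrightarrow> prob_space M \<and> sets M = sets (restrict_space borel (sphere (0::complex) 1))"

text \<open>Integrand 1/|1 - r e^{i(theta - x)}|^2 with z = e^{ix} on the circle, so that
  e^{i(theta-x)} = e^{i theta} * cnj z; value infinity where the denominator vanishes.\<close>
definition poisson_dens :: "real \<Rightarrow> real \<Rightarrow> complex \<Rightarrow> ennreal" where
  "poisson_dens r \<theta> z =
     (let d = (cmod (1 - of_real r * cis \<theta> * cnj z))\<^sup>2 in
      if d = 0 then \<infinity> else ennreal (1 / d))"

text \<open>f(r,theta) for r \<noteq> 1 and f(1^-,theta) (the integral formula) for r = 1.\<close>
definition fP :: "complex measure \<Rightarrow> real \<Rightarrow> real \<Rightarrow> ennreal" where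
  "fP M r \<theta> =
     (if r = 1 then (\<integral>\<^sup>+ z. poisson_dens 1 \<theta> z \<partial>M)
      else ennreal ((1/2) * (1 - r\<^sup>2) / (- ln r)) * (\<integral>\<^sup>+ z. poisson_dens r \<theta> z \<partial>M))"

text \<open>T(r e^{i theta}) = 1 / f, with 1/\<infinity> = 0.\<close>
definition TP :: "complex measure \<Rightarrow> real \<Rightarrow> real \<Rightarrow> real" where
  "TP M r \<theta> = enn2real (inverse (fP M r \<theta>))"

end

theory Submission
  imports Defs "HOL-Real_Asymp.Real_Asymp"
begin

text \<open>Write \<open>c = cos(\<theta> - x) \<in> [-1, 1]\<close> and \<open>t = - ln r\<close>. The integrand of \<open>f(r, \<theta>)\<close>,
  prefactor included, is \<open>sinh t / (2 t (cosh t - c))\<close>: an even function of \<open>t\<close> which for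
  \<open>|c| \<le> 1\<close> strictly decreases in \<open>|t|\<close> and stays below its boundary value \<open>1 / (2 - 2c)\<close>.
  Integrating, \<open>f\<close> is invariant under \<open>r \<mapsto> 1/r\<close>, strictly increasing on \<open>(0, 1)\<close> and
  maximal at \<open>r = 1\<close>, which gives the shape of \<open>T = 1/f\<close>. Since \<open>c \<le> 1\<close>,
  \<open>f(r) \<le> (1 + r) / (2 (1 - r) (- ln r)) \<rightarrow> 0\<close> as \<open>r \<rightarrow> 0\<close>, and the limit at \<open>\<infinity>\<close> follows by symmetry.\<close>

lemma cosh_gt_1_real: "t \<noteq> 0 \<Longrightarrow> 1 < cosh (t::real)"
  using cosh_real_ge_1[of t] cosh_real_one_iff[of t] by linarith

lemma sinh_gt_self_real:
  fixes t :: real assumes "0 < t" shows "t < sinh t"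
proof -
  have "(\<lambda>x. sinh x - x) 0 < (\<lambda>x. sinh x - x) t"
  proof (rule DERIV_pos_imp_increasing_open[OF assms])
    fix x :: real assume "0 < x"
    then show "\<exists>y. ((\<lambda>x. sinh x - x) has_real_derivative y) (at x) \<and> y > 0"
      using cosh_gt_1_real[of x] by (intro exI[of _ "cosh x - 1"]) (auto intro!: derivative_eq_intros)
  qed (intro continuous_intros)
  then show ?thesis by simp
qed

lemma sinh_less_mult_cosh_real:
  fixes t :: real assumes "0 < t" shows "sinh t < t * cosh t"
proof -
  have "(\<lambda>x. x * cosh x - sinh x) 0 < (\<lambda>x. x * cosh x - sinh x) t"
  proof (rule DERIV_pos_imp_increasing_open[OF assms])
    fix x :: real assume "0 < x"
    then show "\<exists>y. ((\<lambda>x. x * cosh x - sinh x) has_real_derivative y) (at x) \<and> y > 0"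
      by (intro exI[of _ "x * sinh x"]) (auto intro!: derivative_eq_intros)
  qed (intro continuous_intros)
  then show ?thesis by simp
qed

definition normalized_poisson_kernel :: "real \<Rightarrow> real \<Rightarrow> real" where
  "normalized_poisson_kernel r c = (1/2) * (1 - r\<^sup>2) / (- ln r) / (1 - 2 * r * c + r\<^sup>2)"

lemma borel_measurable_normalized_poisson_kernel [measurable]:
  "normalized_poisson_kernel r \<in> borel_measurable borel"
  unfolding normalized_poisson_kernel_def[abs_def] by measurable

lemma normalized_poisson_kernel_inverse:
  assumes "0 < r" shows "normalized_poisson_kernel (1 / r) c = normalized_poisson_kernel r c"
proof -
  have "1 - (1/r)\<^sup>2 = - (1 - r\<^sup>2) / r\<^sup>2" "1 - 2 * (1/r) * c + (1/r)\<^sup>2 = (1 - 2 * r * c + r\<^sup>2) / r\<^sup>2"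
    using assms by (simp_all add: field_simps power2_eq_square)
  then show ?thesis
    using assms by (simp add: normalized_poisson_kernel_def ln_div minus_divide_left)
qed

lemma half_one_minus_sq_div_neg_ln_pos:
  fixes r :: real assumes "0 < r" "r \<noteq> 1" shows "0 < (1/2) * (1 - r\<^sup>2) / - ln r"
proof (cases "r < 1")
  case True
  then have "r\<^sup>2 < 1" using assms by (simp add: power_less_one_iff)
  then show ?thesis using True assms by (intro divide_pos_pos mult_pos_pos) auto
next
  case False
  then have "1 < r\<^sup>2" using assms by (simp add: one_less_power)
  then have "0 < (1 - r\<^sup>2) / - ln r" using False assms by (intro divide_neg_neg) auto
  then show ?thesis by simp
qed

lemma one_minus_sq_le_poisson_denominator:
  fixes r c :: real assumes "0 \<le> r" "c \<le> 1" shows "(1 - r)\<^sup>2 \<le> 1 - 2 * r * c + r\<^sup>2"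
  using mult_left_mono[OF assms(2), of "2 * r"] assms by (simp add: power2_eq_square algebra_simps)

lemma normalized_poisson_kernel_pos:
  assumes "0 < r" "r \<noteq> 1" "c \<le> 1" shows "0 < normalized_poisson_kernel r c"
proof -
  have "0 < (1 - r)\<^sup>2" using assms by simp
  then have "0 < 1 - 2 * r * c + r\<^sup>2"
    using one_minus_sq_le_poisson_denominator[of r c] assms by linarith
  then show ?thesis
    unfolding normalized_poisson_kernel_def
    by (rule divide_pos_pos[OF half_one_minus_sq_div_neg_ln_pos[OF assms(1,2)]])
qed

lemma normalized_poisson_kernel_mono:
  assumes "0 < r" "r \<noteq> 1" "c \<le> c'" "c' \<le> 1"
  shows "normalized_poisson_kernel r c \<le> normalized_poisson_kernel r c'"
proof -
  have "0 < (1 - r)\<^sup>2" using assms by simp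
  then have "0 < 1 - 2 * r * c' + r\<^sup>2"
    using one_minus_sq_le_poisson_denominator[of r c'] assms by linarith
  moreover have "1 - 2 * r * c' + r\<^sup>2 \<le> 1 - 2 * r * c + r\<^sup>2"
    using mult_left_mono[OF assms(3), of "2 * r"] assms by simp
  ultimately show ?thesis
    using half_one_minus_sq_div_neg_ln_pos[OF assms(1,2)] unfolding normalized_poisson_kernel_def
    by (intro divide_left_mono) (auto intro: mult_pos_pos)
qed

definition poisson_profile :: "real \<Rightarrow> real \<Rightarrow> real" where
  "poisson_profile c t = sinh t / (t * (cosh t - c))"

lemma poisson_profile_minus [simp]: "poisson_profile c (- t) = poisson_profile c t"
  unfolding poisson_profile_def by (simp add: divide_simps)

lemma normalized_poisson_kernel_eq_profile:
  assumes "0 < r"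
  shows "normalized_poisson_kernel r c = poisson_profile c (- ln r) / 2"
proof -
  have "- ln r = ln (1 / r)" using assms by (simp add: ln_div)
  then have sinh: "sinh (- ln r) = (1 - r\<^sup>2) / (2 * r)" and cosh: "cosh (- ln r) = (1 + r\<^sup>2) / (2 * r)"
    using assms by (simp_all add: sinh_ln_real cosh_ln_real field_simps power2_eq_square)
  have "(1 + r\<^sup>2) / (2 * r) - c = (1 - 2 * r * c + r\<^sup>2) / (2 * r)"
    using assms by (simp add: field_simps)
  then have "poisson_profile c (- ln r)
      = ((1 - r\<^sup>2) / (2 * r)) / (- ln r * ((1 - 2 * r * c + r\<^sup>2) / (2 * r)))"
    unfolding poisson_profile_def sinh cosh by simp
  also have "\<dots> = (1 - r\<^sup>2) / (- ln r * (1 - 2 * r * c + r\<^sup>2))"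
    using assms by (simp add: divide_simps)
  finally show ?thesis
    unfolding normalized_poisson_kernel_def by simp
qed

lemma poisson_profile_strict_antimono:
  assumes "- 1 \<le> c" "c \<le> 1" "0 < a" "a < b"
  shows "poisson_profile c b < poisson_profile c a"
proof (rule DERIV_neg_imp_decreasing_open[OF assms(4)])
  fix t :: real assume "a < t" "t < b"
  then have t: "0 < t" using assms by linarith
  have d: "0 < cosh t - c" using cosh_gt_1_real[of t] t assms by linarith
  define N where "N = cosh t * (t * (cosh t - c)) - sinh t * ((cosh t - c) + t * sinh t)"
  have "N = (1 + cosh t) * (t - sinh t) - (1 + c) * (t * cosh t - sinh t)"
    using cosh_square_eq[of t] unfolding N_def by (simp add: power2_eq_square algebra_simps)
  moreover have "(1 + cosh t) * (t - sinh t) < 0"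
    using sinh_gt_self_real[OF t] by (intro mult_pos_neg) (auto intro: add_pos_pos)
  moreover have "0 \<le> (1 + c) * (t * cosh t - sinh t)"
    using sinh_less_mult_cosh_real[OF t] assms by simp
  ultimately have "N < 0" by linarith
  have "(poisson_profile c has_real_derivative N / (t * (cosh t - c))\<^sup>2) (at t)"
    unfolding poisson_profile_def N_def using t d
    by (auto intro!: derivative_eq_intros simp: power2_eq_square algebra_simps)
  moreover have "N / (t * (cosh t - c))\<^sup>2 < 0"
    using \<open>N < 0\<close> t d by (intro divide_neg_pos) simp_all
  ultimately show "\<exists>y. (poisson_profile c has_real_derivative y) (at t) \<and> y < 0"
    by blast
next
  have "x * (cosh x - c) \<noteq> 0" if "x \<in> {a..b}" for x
    using that assms cosh_gt_1_real[of x] by auto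
  then show "continuous_on {a..b} (poisson_profile c)"
    unfolding poisson_profile_def by (intro continuous_intros) auto
qed

lemma poisson_profile_le:
  assumes "- 1 \<le> c" "c < 1" "0 < t" shows "poisson_profile c t \<le> 1 / (1 - c)"
proof -
  define u where "u = t / 2"
  have u: "0 < u" using assms unfolding u_def by simp
  have t: "t = 2 * u" and sinh: "sinh t = 2 * sinh u * cosh u" and cosh: "cosh t = 2 * (cosh u)\<^sup>2 - 1"
    using sinh_double[of u] cosh_double_cosh[of u] unfolding u_def by simp_all
  have "(1 - c) * sinh t \<le> (1 - c) * (2 * u * (cosh u)\<^sup>2)"
    unfolding sinh using sinh_less_mult_cosh_real[OF u] assms
    by (intro mult_left_mono) (auto simp: power2_eq_square)
  also have "\<dots> \<le> t * (cosh t - c)"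
  proof -
    have "0 \<le> (1 + c) * ((cosh u)\<^sup>2 - 1)"
      using assms cosh_real_ge_1[of u] by (intro mult_nonneg_nonneg) (auto simp: one_le_power)
    then have "(1 - c) * (cosh u)\<^sup>2 \<le> 2 * (cosh u)\<^sup>2 - 1 - c" by (simp add: algebra_simps)
    from mult_left_mono[OF this, of "2 * u"] u show ?thesis
      unfolding cosh unfolding t by (simp add: algebra_simps)
  qed
  finally have "(1 - c) * sinh t \<le> t * (cosh t - c)" .
  moreover have "0 < t * (cosh t - c)" using assms cosh_gt_1_real[of t] by simp
  ultimately show ?thesis
    unfolding poisson_profile_def using assms by (simp add: divide_simps mult.commute)
qed

lemma normalized_poisson_kernel_strict_mono:
  assumes "0 < r" "r < s" "s < 1" "- 1 \<le> c" "c \<le> 1"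
  shows "normalized_poisson_kernel r c < normalized_poisson_kernel s c"
proof -
  have "poisson_profile c (- ln r) < poisson_profile c (- ln s)"
    using assms by (intro poisson_profile_strict_antimono) auto
  then show ?thesis
    using assms by (simp add: normalized_poisson_kernel_eq_profile)
qed

lemma normalized_poisson_kernel_le:
  assumes "0 < r" "r \<noteq> 1" "- 1 \<le> c" "c < 1"
  shows "normalized_poisson_kernel r c \<le> 1 / (2 - 2 * c)"
proof -
  have "poisson_profile c (- ln r) = poisson_profile c \<bar>ln r\<bar>"
    by (cases "0 \<le> ln r") simp_all
  also have "\<dots> \<le> 1 / (1 - c)"
    using assms by (intro poisson_profile_le) auto
  finally show ?thesis
    using assms by (simp add: normalized_poisson_kernel_eq_profile field_simps)
qed

lemma enn2real_inverse_antimono: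
  fixes x y :: ennreal
  assumes "0 < x" "x \<le> y" "x \<noteq> \<infinity>"
  shows "enn2real (inverse y) \<le> enn2real (inverse x)"
proof (cases y rule: ennreal_cases)
  case (real b)
  obtain a where a: "x = ennreal a" "0 < a" using assms by (cases x rule: ennreal_cases) auto
  then have "a \<le> b" using assms real by (simp add: ennreal_le_iff2)
  then show ?thesis using a real by (simp add: inverse_ennreal le_imp_inverse_le)
qed simp

lemma enn2real_inverse_strict_antimono:
  fixes x y :: ennreal
  assumes "0 < x" "x < y"
  shows "enn2real (inverse y) < enn2real (inverse x)"
proof -
  obtain a where a: "x = ennreal a" "0 < a" using assms by (cases x rule: ennreal_cases) auto
  show ?thesis
  proof (cases y rule: ennreal_cases)
    case (real b)
    then have "a < b" using assms a by (simp add: ennreal_less_iff)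
    then show ?thesis using a real by (simp add: inverse_ennreal less_imp_inverse_less)
  qed (use a in \<open>simp add: inverse_ennreal\<close>)
qed

text \<open>For \<open>z = exp (i x)\<close> this is \<open>cos (\<theta> - x)\<close>.\<close>

definition circle_cos :: "real \<Rightarrow> complex \<Rightarrow> real" where
  "circle_cos \<theta> z = Re (cis \<theta> * cnj z)"

lemma circle_cos_bounds:
  assumes "cmod z = 1" shows "- 1 \<le> circle_cos \<theta> z" "circle_cos \<theta> z \<le> 1"
proof -
  have "\<bar>circle_cos \<theta> z\<bar> \<le> 1"
    using abs_Re_le_cmod[of "cis \<theta> * cnj z"] assms by (simp add: circle_cos_def norm_mult)
  then show "- 1 \<le> circle_cos \<theta> z" "circle_cos \<theta> z \<le> 1" by auto
qed

lemma norm_one_minus_cis_cnj_sq: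
  assumes "cmod z = 1"
  shows "(cmod (1 - of_real r * cis \<theta> * cnj z))\<^sup>2 = 1 - 2 * r * circle_cos \<theta> z + r\<^sup>2"
proof -
  define w where "w = cis \<theta> * cnj z"
  have "(Re w)\<^sup>2 + (Im w)\<^sup>2 = 1"
    using assms cmod_power2[of w] by (simp add: w_def norm_mult)
  moreover have "(cmod (1 - of_real r * w))\<^sup>2 = (1 - r * Re w)\<^sup>2 + (r * Im w)\<^sup>2"
    by (simp add: cmod_power2)
  moreover have "\<dots> = 1 - 2 * r * Re w + r\<^sup>2 * ((Re w)\<^sup>2 + (Im w)\<^sup>2)"
    by (simp add: power2_eq_square algebra_simps)
  ultimately show ?thesis by (simp add: circle_cos_def w_def mult.assoc)
qed

lemma poisson_dens_eq:
  assumes "cmod z = 1" "0 < r" "r \<noteq> 1"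
  shows "poisson_dens r \<theta> z = ennreal (1 / (1 - 2 * r * circle_cos \<theta> z + r\<^sup>2))"
proof -
  have "0 < (1 - r)\<^sup>2" using assms by simp
  then have "0 < 1 - 2 * r * circle_cos \<theta> z + r\<^sup>2"
    using one_minus_sq_le_poisson_denominator[of r "circle_cos \<theta> z"]
      circle_cos_bounds(2)[OF assms(1), of \<theta>] assms
    by linarith
  then show ?thesis
    using norm_one_minus_cis_cnj_sq[OF assms(1)] by (simp add: poisson_dens_def Let_def)
qed

lemma normalized_poisson_kernel_le_poisson_dens_1:
  assumes "cmod z = 1" "0 < r" "r \<noteq> 1"
  shows "ennreal (normalized_poisson_kernel r (circle_cos \<theta> z)) \<le> poisson_dens 1 \<theta> z"
proof -
  define c where "c = circle_cos \<theta> z"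
  have d: "(cmod (1 - of_real 1 * cis \<theta> * cnj z))\<^sup>2 = 2 - 2 * c"
    using norm_one_minus_cis_cnj_sq[OF assms(1), of 1] by (simp add: c_def)
  show ?thesis
  proof (cases "c = 1")
    case False
    then have "- 1 \<le> c" "c < 1" using circle_cos_bounds[OF assms(1), of \<theta>] by (auto simp: c_def)
    then show ?thesis
      using d normalized_poisson_kernel_le[OF assms(2,3)]
      by (simp add: poisson_dens_def c_def[symmetric] ennreal_leI)
  qed (use d in \<open>simp add: poisson_dens_def\<close>)
qed

locale circle_prob_space =
  fixes M :: "complex measure"
  assumes circle_borel_prob: "circle_borel_prob M"
begin

sublocale prob_space M
  using circle_borel_prob by (simp add: circle_borel_prob_def)

lemma sets_eq: "sets M = sets (restrict_space borel (sphere (0::complex) 1))"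
  using circle_borel_prob by (simp add: circle_borel_prob_def)

lemma space_eq: "space M = sphere 0 1"
  using sets_eq_imp_space_eq[OF sets_eq] by (simp add: space_restrict_space)

lemma measurable_circle_cos:
  assumes "g \<in> borel_measurable borel"
  shows "(\<lambda>z. g (circle_cos \<theta> z)) \<in> borel_measurable M"
proof -
  have "circle_cos \<theta> \<in> borel_measurable borel"
    unfolding circle_cos_def by (intro borel_measurable_continuous_onI continuous_intros)
  then show ?thesis
    unfolding measurable_cong_sets[OF sets_eq refl]
    by (intro measurable_restrict_space1 measurable_compose[OF _ assms])
qed

lemma fP_eq_nn_integral:
  assumes "0 < r" "r \<noteq> 1"
  shows "fP M r \<theta> = (\<integral>\<^sup>+ z. ennreal (normalized_poisson_kernel r (circle_cos \<theta> z)) \<partial>M)"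
proof -
  define K where "K = (1/2) * (1 - r\<^sup>2) / - ln r"
  have K: "0 < K" unfolding K_def using half_one_minus_sq_div_neg_ln_pos[OF assms] .
  have "(\<integral>\<^sup>+ z. poisson_dens r \<theta> z \<partial>M)
      = (\<integral>\<^sup>+ z. ennreal (1 / (1 - 2 * r * circle_cos \<theta> z + r\<^sup>2)) \<partial>M)"
    using assms by (intro nn_integral_cong) (simp add: space_eq poisson_dens_eq)
  moreover have "(\<lambda>z. ennreal (1 / (1 - 2 * r * circle_cos \<theta> z + r\<^sup>2))) \<in> borel_measurable M"
    by (intro measurable_compose[OF measurable_circle_cos[of "\<lambda>c. 1 / (1 - 2 * r * c + r\<^sup>2)"]]) auto
  ultimately have "ennreal K * (\<integral>\<^sup>+ z. poisson_dens r \<theta> z \<partial>M)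
      = (\<integral>\<^sup>+ z. ennreal K * ennreal (1 / (1 - 2 * r * circle_cos \<theta> z + r\<^sup>2)) \<partial>M)"
    by (simp add: nn_integral_cmult)
  also have "\<dots> = (\<integral>\<^sup>+ z. ennreal (normalized_poisson_kernel r (circle_cos \<theta> z)) \<partial>M)"
    unfolding normalized_poisson_kernel_def K_def[symmetric] using K
    by (intro nn_integral_cong) (simp add: ennreal_mult'[symmetric])
  finally show ?thesis
    using assms by (simp add: fP_def K_def)
qed

lemma fP_bounds:
  assumes "0 < r" "r \<noteq> 1"
  shows "ennreal (normalized_poisson_kernel r (- 1)) \<le> fP M r \<theta>"
    and "fP M r \<theta> \<le> ennreal (normalized_poisson_kernel r 1)"
proof -
  have lower: "normalized_poisson_kernel r (- 1) \<le> normalized_poisson_kernel r (circle_cos \<theta> z)"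
    and upper: "normalized_poisson_kernel r (circle_cos \<theta> z) \<le> normalized_poisson_kernel r 1"
    if "z \<in> space M" for z
    using that circle_cos_bounds[of z \<theta>] assms
    by (auto simp: space_eq intro!: normalized_poisson_kernel_mono)
  have "(\<integral>\<^sup>+ z. ennreal (normalized_poisson_kernel r (- 1)) \<partial>M) \<le> fP M r \<theta>"
    unfolding fP_eq_nn_integral[OF assms] by (intro nn_integral_mono ennreal_leI lower)
  then show "ennreal (normalized_poisson_kernel r (- 1)) \<le> fP M r \<theta>"
    by (simp add: emeasure_space_1)
  have "fP M r \<theta> \<le> (\<integral>\<^sup>+ z. ennreal (normalized_poisson_kernel r 1) \<partial>M)"
    unfolding fP_eq_nn_integral[OF assms] by (intro nn_integral_mono ennreal_leI upper)
  then show "fP M r \<theta> \<le> ennreal (normalized_poisson_kernel r 1)"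
    by (simp add: emeasure_space_1)
qed

lemma fP_pos:
  assumes "0 < r" "r \<noteq> 1" shows "0 < fP M r \<theta>"
proof -
  have "0 < ennreal (normalized_poisson_kernel r (- 1))"
    using normalized_poisson_kernel_pos[OF assms, of "- 1"] by simp
  then show ?thesis using fP_bounds(1)[OF assms, of \<theta>] by order
qed

lemma fP_finite:
  assumes "0 < r" "r \<noteq> 1" shows "fP M r \<theta> \<noteq> \<infinity>"
  using neq_top_trans[OF ennreal_neq_top fP_bounds(2)[OF assms]] by simp

lemma fP_strict_mono:
  assumes "0 < r" "r < s" "s < 1"
  shows "fP M r \<theta> < fP M s \<theta>"
proof -
  have r: "0 < r" "r \<noteq> 1" and s: "0 < s" "s \<noteq> 1" using assms by auto
  have less: "normalized_poisson_kernel r (circle_cos \<theta> z) < normalized_poisson_kernel s (circle_cos \<theta> z)"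
    if "z \<in> space M" for z
    using that circle_cos_bounds[of z \<theta>] assms
    by (intro normalized_poisson_kernel_strict_mono) (auto simp: space_eq)
  have "\<not> (AE z in M. ennreal (normalized_poisson_kernel s (circle_cos \<theta> z))
                      \<le> ennreal (normalized_poisson_kernel r (circle_cos \<theta> z)))"
  proof
    assume "AE z in M. ennreal (normalized_poisson_kernel s (circle_cos \<theta> z))
                      \<le> ennreal (normalized_poisson_kernel r (circle_cos \<theta> z))"
    with AE_space have "AE z in M. False"
    proof eventually_elim
      case (elim z)
      have "0 < normalized_poisson_kernel s (circle_cos \<theta> z)"
        using less[OF elim(1)] normalized_poisson_kernel_pos[OF r, of "circle_cos \<theta> z"]
          circle_cos_bounds(2)[of z \<theta>] elim(1) by (simp add: space_eq)
      then have "ennreal (normalized_poisson_kernel r (circle_cos \<theta> z))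
                 < ennreal (normalized_poisson_kernel s (circle_cos \<theta> z))"
        by (intro ennreal_lessI less elim(1))
      with elim(2) show False by simp
    qed
    then show False by simp
  qed
  moreover have "AE z in M. ennreal (normalized_poisson_kernel r (circle_cos \<theta> z))
                            \<le> ennreal (normalized_poisson_kernel s (circle_cos \<theta> z))"
    using less by (intro AE_I2 ennreal_leI less_imp_le)
  ultimately show ?thesis
    using fP_finite[OF r, of \<theta>] unfolding fP_eq_nn_integral[OF r] fP_eq_nn_integral[OF s]
    by (intro nn_integral_less) (auto intro!: measurable_circle_cos)
qed

lemma fP_le_fP_1:
  assumes "0 < r" shows "fP M r \<theta> \<le> fP M 1 \<theta>"
proof (cases "r = 1")
  case False
  then have "(\<integral>\<^sup>+ z. ennreal (normalized_poisson_kernel r (circle_cos \<theta> z)) \<partial>M)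
      \<le> (\<integral>\<^sup>+ z. poisson_dens 1 \<theta> z \<partial>M)"
    using assms by (intro nn_integral_mono normalized_poisson_kernel_le_poisson_dens_1) (simp_all add: space_eq)
  then show ?thesis
    unfolding fP_eq_nn_integral[OF assms False] by (simp add: fP_def)
qed simp

lemma fP_inverse:
  assumes "0 < r" shows "fP M (1 / r) \<theta> = fP M r \<theta>"
  using assms
  by (cases "r = 1") (simp_all add: fP_eq_nn_integral normalized_poisson_kernel_inverse)

lemma TP_strict_antimono:
  assumes "0 < r" "r < s" "s < 1"
  shows "TP M s \<theta> < TP M r \<theta>"
  unfolding TP_def using assms
  by (intro enn2real_inverse_strict_antimono fP_pos fP_strict_mono) auto

lemma TP_inverse:
  assumes "0 < r" shows "TP M (1 / r) \<theta> = TP M r \<theta>"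
  using fP_inverse[OF assms] by (simp add: TP_def)

lemma TP_1_le:
  assumes "0 < r" shows "TP M 1 \<theta> \<le> TP M r \<theta>"
proof (cases "r = 1")
  case False
  then show ?thesis
    unfolding TP_def using assms
    by (intro enn2real_inverse_antimono fP_pos fP_finite fP_le_fP_1) auto
qed simp

lemma TP_ge:
  assumes "0 < r" "r \<noteq> 1"
  shows "1 / normalized_poisson_kernel r 1 \<le> TP M r \<theta>"
proof -
  have "enn2real (inverse (ennreal (normalized_poisson_kernel r 1))) \<le> TP M r \<theta>"
    unfolding TP_def using assms by (intro enn2real_inverse_antimono fP_pos fP_finite fP_bounds(2))
  then show ?thesis
    using normalized_poisson_kernel_pos[OF assms, of 1] by (simp add: inverse_ennreal inverse_eq_divide)
qed

lemma TP_at_right_0: "filterlim (\<lambda>r. TP M r \<theta>) at_top (at_right 0)"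
proof (rule filterlim_at_top_mono)
  show "filterlim (\<lambda>r. 1 / normalized_poisson_kernel r 1) at_top (at_right 0)"
    unfolding normalized_poisson_kernel_def by real_asymp
  show "\<forall>\<^sub>F r in at_right 0. 1 / normalized_poisson_kernel r 1 \<le> TP M r \<theta>"
    using eventually_at_right_real[OF zero_less_one] by eventually_elim (simp add: TP_ge)
qed

lemma TP_at_top: "filterlim (\<lambda>r. TP M r \<theta>) at_top at_top"
proof -
  have "filterlim (\<lambda>r. TP M (inverse r) \<theta>) at_top at_top"
    by (rule filterlim_compose[OF TP_at_right_0 filterlim_inverse_at_right_top])
  moreover have "\<forall>\<^sub>F r in at_top. TP M (inverse r) \<theta> = TP M r \<theta>"
    using eventually_gt_at_top[of "0::real"]
    by eventually_elim (metis TP_inverse inverse_eq_divide)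
  ultimately show ?thesis by (simp add: filterlim_cong)
qed

end

theorem lemma4p3:
  fixes M :: "complex measure" and \<theta> :: real
  assumes "circle_borel_prob M"
  shows "(\<forall>r s. 0 < r \<and> r < s \<and> s < 1 \<longrightarrow> TP M s \<theta> < TP M r \<theta>)
       \<and> (\<forall>r s. 1 < r \<and> r < s \<longrightarrow> TP M r \<theta> < TP M s \<theta>)
       \<and> (\<forall>r>0. TP M 1 \<theta> \<le> TP M r \<theta>)
       \<and> filterlim (\<lambda>r. TP M r \<theta>) at_top (at_right 0)
       \<and> filterlim (\<lambda>r. TP M r \<theta>) at_top at_top
       \<and> (\<forall>r>0. TP M r \<theta> = TP M (1 / r) \<theta>)"
proof -
  interpret circle_prob_space M by standard fact
  have "TP M r \<theta> < TP M s \<theta>" if "1 < r" "r < s" for r s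
    using TP_strict_antimono[of "1 / s" "1 / r" \<theta>] that by (simp add: TP_inverse divide_strict_left_mono)
  then show ?thesis
    using TP_strict_antimono TP_1_le TP_at_right_0 TP_at_top TP_inverse by auto
qed

end
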